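(* Let $(\Omega,\rho)$ be a metric space, $\beta\in(0,1]$, $A\subset\Omega$ finite with $|A|\ge2$, and $g:A\to[0,1]$ not constant. Let $F:\Omega\to[0,1]$ be the $\beta$-PMSE of $g$ from $A$. Let $E\subset\Omega$ satisfy $\mathrm{diam}(E)^\beta\le\frac12\min_{x\ne x'\in A}\rho(x,x')^\beta$. Then $\sup_{x,x'\in E}\frac{\Lambda^\beta_F(x)}{\Lambda^\beta_F(x')}\le2$.
   Context: $\Lambda_F^\beta(x):=\sup_{y\in\Omega\setminus\{x\}}\frac{|F(x)-F(y)|}{\rho(x,y)^\beta}$. For $x\in\Omega$ and $u,v\in A$ (excluding $u=v=x$), $R_x(u,v):=\frac{g(v)-g(u)}{\rho(x,v)^\beta+\rho(x,u)^\beta}$, $F_x(u,v):=g(u)+R_x(u,v)\rho(x,u)^\beta$, $R^*_x:=\max_{u,v\in A}R_x(u,v)$, $W_x(\epsilon):=\{(u,v)\in A\times A: R_x(u,v)>R_x^*-\epsilon\}$, $\Phi_x(\epsilon):=\{F_x(u,v):(u,v)\in W_x(\epsilon)\}$. The $\beta$-PMSE is $F(x):=\lim_{\epsilon\to0^+}\Phi_x(\epsilon)$, i.e. the unique $r$ with $\sup_{\phi\in\Phi_x(\epsilon)}|\phi-r|\to0$; when a unique maximizer $(u^*_x,v^*_x)$ of $R_x$ exists this equals $g(u^*_x)+\frac{\rho(x,u^*_x)^\beta}{\rho(x,u^*_x)^\beta+\rho(x,v^*_x)^\beta}(g(v^*_x)-g(u^*_x))$. *)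

theory Defs
  imports "HOL-Analysis.Analysis"
begin

definition hoelder_at :: "'a set \<Rightarrow> ('a \<Rightarrow> 'a \<Rightarrow> real) \<Rightarrow> real \<Rightarrow> ('a \<Rightarrow> real) \<Rightarrow> 'a \<Rightarrow> ereal" where
  "hoelder_at \<Omega> \<rho> \<beta> F x = (SUP y \<in> \<Omega> - {x}. ereal (\<bar>F x - F y\<bar> / \<rho> x y powr \<beta>))"

definition pmse_R :: "('a \<Rightarrow> 'a \<Rightarrow> real) \<Rightarrow> real \<Rightarrow> ('a \<Rightarrow> real) \<Rightarrow> 'a \<Rightarrow> 'a \<Rightarrow> 'a \<Rightarrow> real" where
  "pmse_R \<rho> \<beta> g x u v = (g v - g u) / (\<rho> x v powr \<beta> + \<rho> x u powr \<beta>)"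

definition pmse_F :: "('a \<Rightarrow> 'a \<Rightarrow> real) \<Rightarrow> real \<Rightarrow> ('a \<Rightarrow> real) \<Rightarrow> 'a \<Rightarrow> 'a \<Rightarrow> 'a \<Rightarrow> real" where
  "pmse_F \<rho> \<beta> g x u v = g u + pmse_R \<rho> \<beta> g x u v * \<rho> x u powr \<beta>"

definition pmse_pairs :: "'a set \<Rightarrow> 'a \<Rightarrow> ('a \<times> 'a) set" where
  "pmse_pairs A x = {(u, v). u \<in> A \<and> v \<in> A \<and> \<not> (u = x \<and> v = x)}"

definition pmse_Rstar :: "('a \<Rightarrow> 'a \<Rightarrow> real) \<Rightarrow> real \<Rightarrow> 'a set \<Rightarrow> ('a \<Rightarrow> real) \<Rightarrow> 'a \<Rightarrow> real" where
  "pmse_Rstar \<rho> \<beta> A g x = Max ((\<lambda>(u, v). pmse_R \<rho> \<beta> g x u v) ` pmse_pairs A x)"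

definition pmse_W :: "('a \<Rightarrow> 'a \<Rightarrow> real) \<Rightarrow> real \<Rightarrow> 'a set \<Rightarrow> ('a \<Rightarrow> real) \<Rightarrow> 'a \<Rightarrow> real \<Rightarrow> ('a \<times> 'a) set" where
  "pmse_W \<rho> \<beta> A g x \<epsilon> =
     {(u, v) \<in> pmse_pairs A x. pmse_R \<rho> \<beta> g x u v > pmse_Rstar \<rho> \<beta> A g x - \<epsilon>}"

definition pmse_Phi :: "('a \<Rightarrow> 'a \<Rightarrow> real) \<Rightarrow> real \<Rightarrow> 'a set \<Rightarrow> ('a \<Rightarrow> real) \<Rightarrow> 'a \<Rightarrow> real \<Rightarrow> real set" where
  "pmse_Phi \<rho> \<beta> A g x \<epsilon> = (\<lambda>(u, v). pmse_F \<rho> \<beta> g x u v) ` pmse_W \<rho> \<beta> A g x \<epsilon>"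

definition pmse :: "('a \<Rightarrow> 'a \<Rightarrow> real) \<Rightarrow> real \<Rightarrow> 'a set \<Rightarrow> ('a \<Rightarrow> real) \<Rightarrow> 'a \<Rightarrow> real" where
  "pmse \<rho> \<beta> A g x = (THE r. ((\<lambda>\<epsilon>. Sup ((\<lambda>\<phi>. \<bar>\<phi> - r\<bar>) ` pmse_Phi \<rho> \<beta> A g x \<epsilon>)) \<longlongrightarrow> 0) (at_right 0))"

end

theory Submission
  imports Defs
begin

text \<open>Writing \<open>d = \<rho>\<^sup>\<beta>\<close> and \<open>R\<^sup>*\<^sub>x\<close> for the maximal slope, the defining inequality
  \<open>g v - g u \<le> R\<^sup>*\<^sub>x (d x v + d x u)\<close> says that the lower envelope \<open>max\<^sub>v (g v - R\<^sup>*\<^sub>x d x v)\<close>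
  lies below the upper envelope \<open>min\<^sub>u (g u + R\<^sup>*\<^sub>x d x u)\<close>, and a maximizing pair makes them
  meet; the PMSE at \<open>x\<close> is the common value. Since \<open>d\<close> is again a metric (the snowflake
  of \<open>\<rho>\<close>), shifting the envelopes from \<open>x\<close> to \<open>y\<close> shows that the PMSE is \<open>R\<^sup>*\<^sub>x\<close>-Hoelder at
  \<open>x\<close>, and as it interpolates \<open>g\<close> on \<open>A\<close>, the maximizing pair shows that \<open>R\<^sup>*\<^sub>x\<close> is exactly
  the pointwise Hoelder constant. Finally, if \<open>d x x'\<close> is at most half the separation of \<open>A\<close>,
  the denominator of the maximizing pair at \<open>x\<close> grows by a factor at most 2 when evaluated
  at \<open>x'\<close>, so \<open>R\<^sup>*\<^sub>x \<le> 2 R\<^sup>*\<^sub>x\<^sub>'\<close>.\<close>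

lemma powr_add_le_add_powr:
  fixes a b p :: real
  assumes "0 \<le> a" "0 \<le> b" "0 < p" "p \<le> 1"
  shows "(a + b) powr p \<le> a powr p + b powr p"
proof (cases "a + b = 0")
  case True
  then show ?thesis using assms by simp
next
  case False
  then have s: "a + b > 0" using assms by simp
  have a: "a / (a + b) \<le> (a / (a + b)) powr p"
    using powr_mono'[of p 1 "a / (a + b)"] assms s by simp
  have b: "b / (a + b) \<le> (b / (a + b)) powr p"
    using powr_mono'[of p 1 "b / (a + b)"] assms s by simp
  have "1 = a / (a + b) + b / (a + b)" using s by (simp add: add_divide_distrib[symmetric])
  also have "\<dots> \<le> (a powr p + b powr p) / (a + b) powr p"
    using a b by (simp add: powr_divide assms add_divide_distrib)
  finally show ?thesis using s by (simp add: field_simps)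
qed

lemma Metric_space_powr:
  assumes "Metric_space M d" "0 < p" "p \<le> 1"
  shows "Metric_space M (\<lambda>x y. d x y powr p)"
proof -
  interpret Metric_space M d by fact
  show ?thesis
  proof
    fix x y z
    show "0 \<le> d x y powr p" "d x y powr p = d y x powr p"
      using commute by simp_all
    show "x \<in> M \<Longrightarrow> y \<in> M \<Longrightarrow> d x y powr p = 0 \<longleftrightarrow> x = y"
      by simp
    assume "x \<in> M" "y \<in> M" "z \<in> M"
    then have "d x z powr p \<le> (d x y + d y z) powr p"
      using triangle assms(2) by (intro powr_mono2) auto
    also have "\<dots> \<le> d x y powr p + d y z powr p"
      using assms(2,3) by (intro powr_add_le_add_powr) auto
    finally show "d x z powr p \<le> d x y powr p + d y z powr p" .
  qed
qed

lemma hoelder_at_cong: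
  assumes "\<forall>y\<in>\<Omega>. F y = G y" "x \<in> \<Omega>"
  shows "hoelder_at \<Omega> \<rho> \<beta> F x = hoelder_at \<Omega> \<rho> \<beta> G x"
  unfolding hoelder_at_def using assms by (intro SUP_cong) auto

lemma eventually_near_max_eq_max:
  fixes f :: "'b \<Rightarrow> real"
  assumes "finite P" and "\<forall>p\<in>P. f p \<le> M"
  shows "\<forall>\<^sub>F \<epsilon> in at_right 0. {p \<in> P. M - \<epsilon> < f p} = {p \<in> P. f p = M}"
proof -
  have "\<forall>\<^sub>F \<epsilon> in at_right 0. \<forall>p\<in>P. M - \<epsilon> < f p \<longleftrightarrow> f p = M"
  proof (rule eventually_ball_finite[OF assms(1)], rule ballI)
    fix p assume "p \<in> P"
    show "\<forall>\<^sub>F \<epsilon> in at_right 0. M - \<epsilon> < f p \<longleftrightarrow> f p = M"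
    proof (cases "f p = M")
      case True
      then show ?thesis by (simp add: eventually_at_right_less)
    next
      case False
      with \<open>p \<in> P\<close> assms(2) have "0 < M - f p" by force
      then show ?thesis
        unfolding eventually_at_right_field by (intro exI[of _ "M - f p"]) auto
    qed
  qed
  then show ?thesis by (rule eventually_mono) auto
qed

lemma limit_value_eventually_singleton:
  fixes \<Phi> :: "'b \<Rightarrow> real set"
  assumes "F \<noteq> bot" and "\<forall>\<^sub>F \<epsilon> in F. \<Phi> \<epsilon> = {c}"
  shows "(THE r. ((\<lambda>\<epsilon>. Sup ((\<lambda>\<phi>. \<bar>\<phi> - r\<bar>) ` \<Phi> \<epsilon>)) \<longlongrightarrow> 0) F) = c"
proof -
  have "((\<lambda>\<epsilon>. Sup ((\<lambda>\<phi>. \<bar>\<phi> - r\<bar>) ` \<Phi> \<epsilon>)) \<longlongrightarrow> 0) F \<longleftrightarrow> ((\<lambda>_. \<bar>c - r\<bar>) \<longlongrightarrow> 0) F" for r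
    using assms(2) by (intro tendsto_cong) (auto elim: eventually_mono)
  also have "((\<lambda>_. \<bar>c - r\<bar>) \<longlongrightarrow> 0) F \<longleftrightarrow> r = c" for r
    using tendsto_const_iff[OF assms(1), of "\<bar>c - r\<bar>" 0] by auto
  finally show ?thesis by auto
qed

locale pmse_setting =
  fixes \<Omega> :: "'a set" and \<rho> :: "'a \<Rightarrow> 'a \<Rightarrow> real" and \<beta> :: real
    and A :: "'a set" and g :: "'a \<Rightarrow> real"
  assumes metric: "Metric_space \<Omega> \<rho>"
    and beta_pos: "0 < \<beta>" and beta_le_1: "\<beta> \<le> 1"
    and A_subset: "A \<subseteq> \<Omega>" and finite_A: "finite A"
    and nonconstant: "\<exists>a\<in>A. \<exists>b\<in>A. g a \<noteq> g b"
begin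

sublocale snowflake: Metric_space \<Omega> "\<lambda>x y. \<rho> x y powr \<beta>"
  using metric beta_pos beta_le_1 by (rule Metric_space_powr)

abbreviation d :: "'a \<Rightarrow> 'a \<Rightarrow> real" where "d x y \<equiv> \<rho> x y powr \<beta>"
abbreviation R :: "'a \<Rightarrow> 'a \<Rightarrow> 'a \<Rightarrow> real" where "R \<equiv> pmse_R \<rho> \<beta> g"
abbreviation Rstar :: "'a \<Rightarrow> real" where "Rstar \<equiv> pmse_Rstar \<rho> \<beta> A g"
abbreviation F :: "'a \<Rightarrow> real" where "F \<equiv> pmse \<rho> \<beta> A g"

lemma finite_pairs: "finite (pmse_pairs A x)"
  by (rule finite_subset[of _ "A \<times> A"]) (auto simp: pmse_pairs_def finite_A)

lemma pairs_nonempty: "pmse_pairs A x \<noteq> {}"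
  using nonconstant by (force simp: pmse_pairs_def)

lemma R_le_Rstar: "(u, v) \<in> pmse_pairs A x \<Longrightarrow> R x u v \<le> Rstar x"
  unfolding pmse_Rstar_def using finite_pairs by (intro Max_ge) force+

lemma Rstar_attained:
  obtains u v where "(u, v) \<in> pmse_pairs A x" "R x u v = Rstar x"
proof -
  have "Rstar x \<in> (\<lambda>(u, v). R x u v) ` pmse_pairs A x"
    unfolding pmse_Rstar_def using finite_pairs pairs_nonempty by (intro Max_in) auto
  then show ?thesis using that by force
qed

lemma denominator_pos:
  assumes "x \<in> \<Omega>" "u \<in> A" "v \<in> A" "u \<noteq> v"
  shows "0 < d x v + d x u"
proof -
  have "d x v \<noteq> 0 \<or> d x u \<noteq> 0"
    using assms A_subset snowflake.zero[of x u] snowflake.zero[of x v] by auto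
  then show ?thesis using snowflake.nonneg[of x u] snowflake.nonneg[of x v] by linarith
qed

lemma Rstar_pos:
  assumes "x \<in> \<Omega>"
  shows "0 < Rstar x"
proof -
  obtain a b where ab: "a \<in> A" "b \<in> A" "g a < g b"
    using nonconstant by (metis linorder_neqE_linordered_idom)
  then have "0 < R x a b"
    unfolding pmse_R_def using denominator_pos[OF assms ab(1,2)] by force
  also have "R x a b \<le> Rstar x"
    using ab by (intro R_le_Rstar) (auto simp: pmse_pairs_def)
  finally show ?thesis .
qed

lemma g_diff_le_Rstar:
  assumes "x \<in> \<Omega>" "u \<in> A" "v \<in> A"
  shows "g v - g u \<le> Rstar x * (d x v + d x u)"
proof (cases "u = v")
  case True
  then show ?thesis using Rstar_pos[OF assms(1)] by simp
next
  case False
  then have "R x u v \<le> Rstar x" using assms by (intro R_le_Rstar) (auto simp: pmse_pairs_def)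
  then show ?thesis
    using denominator_pos[OF assms False] unfolding pmse_R_def by (simp add: pos_divide_le_eq)
qed

lemma maximizer_balance:
  assumes "x \<in> \<Omega>" "(u, v) \<in> pmse_pairs A x" "R x u v = Rstar x"
  shows "u \<noteq> v" and "g u + Rstar x * d x u = g v - Rstar x * d x v"
proof -
  show "u \<noteq> v" using assms(3) Rstar_pos[OF assms(1)] unfolding pmse_R_def by auto
  moreover have "u \<in> A" "v \<in> A" using assms(2) by (auto simp: pmse_pairs_def)
  ultimately have "0 < d x v + d x u" using assms(1) by (intro denominator_pos)
  then show "g u + Rstar x * d x u = g v - Rstar x * d x v"
    using assms(3) unfolding pmse_R_def by (simp add: field_simps)
qed

lemma pmse_eq_maximizer:
  assumes x: "x \<in> \<Omega>" and uv: "(u, v) \<in> pmse_pairs A x" "R x u v = Rstar x"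
  shows "F x = g u + Rstar x * d x u"
proof -
  define c where "c = g u + Rstar x * d x u"
  define M where "M = {p \<in> pmse_pairs A x. (\<lambda>(u, v). R x u v) p = Rstar x}"
  have "pmse_F \<rho> \<beta> g x u' v' = c" if "(u', v') \<in> M" for u' v'
  proof -
    have uv': "(u', v') \<in> pmse_pairs A x" "R x u' v' = Rstar x" using that by (auto simp: M_def)
    have A: "u \<in> A" "v \<in> A" "u' \<in> A" "v' \<in> A" using uv(1) uv'(1) by (auto simp: pmse_pairs_def)
    \<comment> \<open>the two balance equations squeeze the upper envelope values at \<open>u\<close> and \<open>u'\<close> together\<close>
    have "g v' - g u \<le> Rstar x * (d x v' + d x u)" "g v - g u' \<le> Rstar x * (d x v + d x u')"
      using A by (simp_all add: g_diff_le_Rstar x)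
    with maximizer_balance(2)[OF x uv] maximizer_balance(2)[OF x uv']
    have "g u' + Rstar x * d x u' = c" unfolding c_def by (simp add: algebra_simps)
    then show ?thesis unfolding pmse_F_def uv'(2) by simp
  qed
  moreover have "(u, v) \<in> M" using uv by (simp add: M_def)
  moreover have "\<forall>\<^sub>F \<epsilon> in at_right 0. pmse_W \<rho> \<beta> A g x \<epsilon> = M"
  proof -
    have "\<forall>p\<in>pmse_pairs A x. (\<lambda>(u, v). R x u v) p \<le> Rstar x" using R_le_Rstar by auto
    from eventually_near_max_eq_max[OF finite_pairs this] show ?thesis
      unfolding pmse_W_def M_def by (rule eventually_mono) (simp add: case_prod_beta' cong: conj_cong)
  qed
  ultimately have "\<forall>\<^sub>F \<epsilon> in at_right 0. pmse_Phi \<rho> \<beta> A g x \<epsilon> = {c}"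
    unfolding pmse_Phi_def by (elim eventually_mono) force
  then show ?thesis
    unfolding pmse_def c_def by (intro limit_value_eventually_singleton) simp_all
qed

lemma pmse_maximizer:
  assumes "x \<in> \<Omega>"
  obtains u v where "u \<in> A" "v \<in> A" "u \<noteq> v"
    "F x = g u + Rstar x * d x u" "F x = g v - Rstar x * d x v"
proof -
  obtain u v where uv: "(u, v) \<in> pmse_pairs A x" "R x u v = Rstar x" by (rule Rstar_attained)
  show ?thesis
  proof
    show "u \<in> A" "v \<in> A" using uv(1) by (auto simp: pmse_pairs_def)
    show "u \<noteq> v" using maximizer_balance(1)[OF assms uv] .
    show "F x = g u + Rstar x * d x u" using pmse_eq_maximizer[OF assms uv] .
    then show "F x = g v - Rstar x * d x v" using maximizer_balance(2)[OF assms uv] by simp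
  qed
qed

lemma pmse_le_upper:
  assumes "x \<in> \<Omega>" "u \<in> A"
  shows "F x \<le> g u + Rstar x * d x u"
proof -
  obtain v where "v \<in> A" "F x = g v - Rstar x * d x v" using pmse_maximizer[OF assms(1)] .
  with g_diff_le_Rstar[OF assms(1,2) \<open>v \<in> A\<close>] show ?thesis by (simp add: algebra_simps)
qed

lemma lower_le_pmse:
  assumes "x \<in> \<Omega>" "v \<in> A"
  shows "g v - Rstar x * d x v \<le> F x"
proof -
  obtain u where "u \<in> A" "F x = g u + Rstar x * d x u" using pmse_maximizer[OF assms(1)] .
  with g_diff_le_Rstar[OF assms(1) \<open>u \<in> A\<close> assms(2)] show ?thesis by (simp add: algebra_simps)
qed

lemma pmse_interpolates:
  assumes "a \<in> A"
  shows "F a = g a"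
  using pmse_le_upper[of a a] lower_le_pmse[of a a] assms A_subset by force

lemma pmse_le_upper_shift:
  assumes "y \<in> \<Omega>" "z \<in> \<Omega>" "u \<in> A" "Rstar y \<le> r"
  shows "F y \<le> g u + r * (d z y + d z u)"
proof -
  have "F y \<le> g u + Rstar y * d y u" using pmse_le_upper[OF assms(1,3)] .
  also have "\<dots> \<le> g u + r * d y u" using assms(4) by (simp add: mult_right_mono)
  also have "\<dots> \<le> g u + r * (d z y + d z u)"
    using snowflake.triangle[OF assms(1,2), of u] snowflake.commute[of y z] assms A_subset
      Rstar_pos[OF assms(1)] by (auto intro: mult_left_mono)
  finally show ?thesis .
qed

lemma lower_shift_le_pmse:
  assumes "y \<in> \<Omega>" "z \<in> \<Omega>" "v \<in> A" "Rstar y \<le> r"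
  shows "g v - r * (d z y + d z v) \<le> F y"
proof -
  have "g v - r * (d z y + d z v) \<le> g v - r * d y v"
    using snowflake.triangle[OF assms(1,2), of v] snowflake.commute[of y z] assms A_subset
      Rstar_pos[OF assms(1)] by (auto intro: mult_left_mono)
  also have "\<dots> \<le> g v - Rstar y * d y v" using assms(4) by (simp add: mult_right_mono)
  also have "\<dots> \<le> F y" using lower_le_pmse[OF assms(1,3)] .
  finally show ?thesis .
qed

lemma pmse_diff_le:
  assumes x: "x \<in> \<Omega>" and y: "y \<in> \<Omega>"
  shows "\<bar>F x - F y\<bar> \<le> Rstar x * d x y"
proof (cases "Rstar y \<le> Rstar x")
  case True
  obtain u v where "u \<in> A" "v \<in> A" "F x = g u + Rstar x * d x u" "F x = g v - Rstar x * d x v"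
    using pmse_maximizer[OF x] .
  with pmse_le_upper_shift[OF y x \<open>u \<in> A\<close> True] lower_shift_le_pmse[OF y x \<open>v \<in> A\<close> True]
  show ?thesis by (simp add: algebra_simps abs_le_iff)
next
  case False
  obtain u v where uv: "u \<in> A" "v \<in> A" "F y = g u + Rstar y * d y u" "F y = g v - Rstar y * d y v"
    using pmse_maximizer[OF y] .
  have "Rstar x * d y u \<le> Rstar y * d y u" "Rstar x * d y v \<le> Rstar y * d y v"
    using False by (simp_all add: mult_right_mono)
  with uv pmse_le_upper_shift[OF x y \<open>u \<in> A\<close> order_refl]
    lower_shift_le_pmse[OF x y \<open>v \<in> A\<close> order_refl] snowflake.commute[of x y]
  show ?thesis by (simp add: algebra_simps abs_le_iff)
qed

lemma pmse_diff_attains_Rstar: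
  assumes x: "x \<in> \<Omega>"
  obtains y where "y \<in> \<Omega> - {x}" "Rstar x * d x y \<le> \<bar>F x - F y\<bar>"
proof -
  obtain u v where uv: "u \<in> A" "v \<in> A" "u \<noteq> v"
    "F x = g u + Rstar x * d x u" "F x = g v - Rstar x * d x v"
    using pmse_maximizer[OF x] .
  \<comment> \<open>one of the two maximizing points differs from \<open>x\<close>, and \<open>F\<close> interpolates \<open>g\<close> there\<close>
  consider "u \<noteq> x" | "v \<noteq> x" using uv(3) by blast
  then show ?thesis
  proof cases
    case 1
    then show ?thesis using that[of u] uv A_subset pmse_interpolates[of u] by auto
  next
    case 2
    then show ?thesis using that[of v] uv A_subset pmse_interpolates[of v] by auto
  qed
qed

lemma hoelder_at_pmse:
  assumes x: "x \<in> \<Omega>"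
  shows "hoelder_at \<Omega> \<rho> \<beta> F x = ereal (Rstar x)"
proof (rule antisym)
  show "hoelder_at \<Omega> \<rho> \<beta> F x \<le> ereal (Rstar x)"
    unfolding hoelder_at_def
  proof (rule SUP_least)
    fix y assume y: "y \<in> \<Omega> - {x}"
    then have "0 < d x y" using x snowflake.nonneg[of x y] snowflake.zero[of x y] by force
    then show "ereal (\<bar>F x - F y\<bar> / d x y) \<le> ereal (Rstar x)"
      using pmse_diff_le[OF x] y by (simp add: pos_divide_le_eq)
  qed
next
  obtain y where y: "y \<in> \<Omega> - {x}" "Rstar x * d x y \<le> \<bar>F x - F y\<bar>"
    using pmse_diff_attains_Rstar[OF x] .
  then have "0 < d x y" using x snowflake.nonneg[of x y] snowflake.zero[of x y] by force
  then have "ereal (Rstar x) \<le> ereal (\<bar>F x - F y\<bar> / d x y)"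
    using y(2) by (simp add: pos_le_divide_eq)
  also have "\<dots> \<le> hoelder_at \<Omega> \<rho> \<beta> F x"
    unfolding hoelder_at_def using y(1) by (rule SUP_upper)
  finally show "ereal (Rstar x) \<le> hoelder_at \<Omega> \<rho> \<beta> F x" .
qed

lemma Rstar_le_twice:
  assumes x: "x \<in> \<Omega>" and x': "x' \<in> \<Omega>"
    and close: "d x' x \<le> (1/2) * Min {\<rho> a b powr \<beta> | a b. a \<in> A \<and> b \<in> A \<and> a \<noteq> b}"
  shows "Rstar x \<le> 2 * Rstar x'"
proof -
  obtain u v where uv: "u \<in> A" "v \<in> A" "u \<noteq> v"
    "F x = g u + Rstar x * d x u" "F x = g v - Rstar x * d x v"
    using pmse_maximizer[OF x] .
  have uv\<Omega>: "u \<in> \<Omega>" "v \<in> \<Omega>" using uv A_subset by auto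
  define D where "D = d x v + d x u"
  define D' where "D' = d x' v + d x' u"
  have "0 < D" unfolding D_def using denominator_pos[OF x uv(1-3)] .
  have fin: "finite {\<rho> a b powr \<beta> | a b. a \<in> A \<and> b \<in> A \<and> a \<noteq> b}"
    by (rule finite_subset[of _ "(\<lambda>(a, b). \<rho> a b powr \<beta>) ` (A \<times> A)"]) (auto simp: finite_A)
  \<comment> \<open>\<open>d x' x\<close> is at most half of \<open>d u v \<le> D\<close>, so moving from \<open>x\<close> to \<open>x'\<close> adds at most \<open>D\<close>\<close>
  have "Min {\<rho> a b powr \<beta> | a b. a \<in> A \<and> b \<in> A \<and> a \<noteq> b} \<le> d u v"
    using uv by (intro Min_le[OF fin]) blast
  moreover have "d u v \<le> d u x + d x v" by (rule snowflake.triangle[OF uv\<Omega>(1) x uv\<Omega>(2)])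
  moreover have "d x' v \<le> d x' x + d x v" by (rule snowflake.triangle[OF x' x uv\<Omega>(2)])
  moreover have "d x' u \<le> d x' x + d x u" by (rule snowflake.triangle[OF x' x uv\<Omega>(1)])
  ultimately have "D' \<le> 2 * D" using close snowflake.commute[of u x] unfolding D_def D'_def by argo
  have "Rstar x * D = g v - g u" using uv(4,5) unfolding D_def by (simp add: algebra_simps)
  also have "\<dots> \<le> Rstar x' * D'" unfolding D'_def by (rule g_diff_le_Rstar[OF x' uv(1,2)])
  also have "\<dots> \<le> Rstar x' * (2 * D)" using Rstar_pos[OF x'] \<open>D' \<le> 2 * D\<close> by simp
  finally show ?thesis using \<open>0 < D\<close> by simp
qed

end

theorem mainTheorem12:
  fixes \<Omega> :: "'a set" and \<rho> :: "'a \<Rightarrow> 'a \<Rightarrow> real" and \<beta> :: real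
    and A E :: "'a set" and g F :: "'a \<Rightarrow> real"
  assumes "Metric_space \<Omega> \<rho>"
    and "0 < \<beta>" and "\<beta> \<le> 1"
    and "A \<subseteq> \<Omega>" and "finite A" and "card A \<ge> 2"
    and "\<forall>a\<in>A. 0 \<le> g a \<and> g a \<le> 1"
    and "\<exists>a\<in>A. \<exists>b\<in>A. g a \<noteq> g b"
    and "\<forall>x\<in>\<Omega>. F x = pmse \<rho> \<beta> A g x"
    and "E \<subseteq> \<Omega>"
    and "\<forall>e\<in>E. \<forall>e'\<in>E. \<rho> e e' powr \<beta>
           \<le> (1/2) * Min {\<rho> a b powr \<beta> | a b. a \<in> A \<and> b \<in> A \<and> a \<noteq> b}"
  shows "\<forall>x\<in>E. \<forall>x'\<in>E. hoelder_at \<Omega> \<rho> \<beta> F x \<le> 2 * hoelder_at \<Omega> \<rho> \<beta> F x'"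
proof (intro ballI)
  interpret pmse_setting \<Omega> \<rho> \<beta> A g using assms by (intro pmse_setting.intro) auto
  fix x x' assume "x \<in> E" "x' \<in> E"
  then have x: "x \<in> \<Omega>" and x': "x' \<in> \<Omega>" using \<open>E \<subseteq> \<Omega>\<close> by auto
  have "hoelder_at \<Omega> \<rho> \<beta> F x = ereal (pmse_Rstar \<rho> \<beta> A g x)"
    using hoelder_at_cong[OF assms(9) x] hoelder_at_pmse[OF x] by simp
  also have "\<dots> \<le> ereal (2 * pmse_Rstar \<rho> \<beta> A g x')"
    using Rstar_le_twice[OF x x'] assms(11) \<open>x \<in> E\<close> \<open>x' \<in> E\<close> by simp
  also have "\<dots> = 2 * hoelder_at \<Omega> \<rho> \<beta> F x'"
    using hoelder_at_cong[OF assms(9) x'] hoelder_at_pmse[OF x'] by simp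
  finally show "hoelder_at \<Omega> \<rho> \<beta> F x \<le> 2 * hoelder_at \<Omega> \<rho> \<beta> F x'" .
qed

end
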